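(* Let $n\ge2$, $w\in\widetilde{S}_n^\circ$ with $t$-coordinates $(t_1,\dots,t_{n-1})$, and fix $1\le i\le n-1$. Let $j$ be the largest integer $j\ge1$ with $w(i+1)>w(i+jn)$ if such $j$ exists, and $j=0$ otherwise. Then $t_i$ equals the number of window boundaries between positions $i+1$ and $i+jn$, i.e. the number of integers $r$ with $i+1\le rn< i+jn$ (this is $0$ when $j=0$).
   Context: An affine permutation of size $n$ is a bijection $w:\mathbb{Z}\to\mathbb{Z}$ with $w(i+n)=w(i)+n$ for all $i$ and $w(1)+\cdots+w(n)=\binom{n+1}{2}$, base window $[w_1,\dots,w_n]=[w(1),\dots,w(n)]$. $\widetilde{S}_n^\circ$ is the set of such $w$ with $w_1<\cdots<w_n$. For $w\in\widetilde{S}_n^\circ$, an integer is a bead if it equals $w_j-mn$ for some $j$ and integer $m\ge0$, a gap otherwise; the gap vector $\dot g(w)=(g_1,\dots,g_{n-1})$ has $g_i$ = number of gaps strictly between $w_i$ and $w_{i+1}$. $\mathsf{BIAS}_n$ is the set of $w\in\widetilde{S}_n^\circ$ with all $w_{i+1}-w_i\in\{1,\dots,n-1\}$; the bias of $w\in\widetilde{S}_n^\circ$ is the unique $b\in\mathsf{BIAS}_n$ with $b_{i+1}-b_i\equiv w_{i+1}-w_i\pmod n$ for all $i$. The $t$-coordinates of $w$ are the unique $t\in\mathbb{Z}_{\ge0}^{n-1}$ with $\dot g(w)=(t_1,2t_2,\dots,(n-1)t_{n-1})+\dot g(b)$, $b$ the bias of $w$ (this $t$ exists and is unique). Window boundaries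 lie between positions $rn$ and $rn+1$ for $r\in\mathbb{Z}$. *)

theory Defs
  imports Main
begin

definition affine_perm :: "nat \<Rightarrow> (int \<Rightarrow> int) \<Rightarrow> bool" where
  "affine_perm n w \<longleftrightarrow> bij w \<and> (\<forall>i. w (i + int n) = w i + int n)
     \<and> (\<Sum>k = 1..int n. w k) = int ((n + 1) choose 2)"

definition Scirc :: "nat \<Rightarrow> (int \<Rightarrow> int) set" where
  "Scirc n = {w. affine_perm n w \<and> (\<forall>i. 1 \<le> i \<and> i < int n \<longrightarrow> w i < w (i + 1))}"

definition bead :: "nat \<Rightarrow> (int \<Rightarrow> int) \<Rightarrow> int \<Rightarrow> bool" where
  "bead n w x \<longleftrightarrow> (\<exists>j m. 1 \<le> j \<and> j \<le> int n \<and> 0 \<le> m \<and> x = w j - m * int n)"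

definition gapcount :: "nat \<Rightarrow> (int \<Rightarrow> int) \<Rightarrow> int \<Rightarrow> nat" where
  "gapcount n w i = card {x. w i < x \<and> x < w (i + 1) \<and> \<not> bead n w x}"

definition BIAS :: "nat \<Rightarrow> (int \<Rightarrow> int) set" where
  "BIAS n = {w \<in> Scirc n. \<forall>i. 1 \<le> i \<and> i < int n \<longrightarrow>
      w (i + 1) - w i \<in> {1 .. int n - 1}}"

definition bias_of :: "nat \<Rightarrow> (int \<Rightarrow> int) \<Rightarrow> (int \<Rightarrow> int)" where
  "bias_of n w = (THE b. b \<in> BIAS n \<and> (\<forall>i. 1 \<le> i \<and> i < int n \<longrightarrow>
      (b (i + 1) - b i) mod int n = (w (i + 1) - w i) mod int n))"

definition t_coord :: "nat \<Rightarrow> (int \<Rightarrow> int) \<Rightarrow> int \<Rightarrow> nat" where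
  "t_coord n w i = (THE t. int (gapcount n w i) = i * int t + int (gapcount n (bias_of n w) i))"

definition jmax :: "nat \<Rightarrow> (int \<Rightarrow> int) \<Rightarrow> int \<Rightarrow> nat" where
  "jmax n w i = (if \<exists>j::nat. 1 \<le> j \<and> w (i + 1) > w (i + int j * int n)
     then (GREATEST j::nat. 1 \<le> j \<and> w (i + 1) > w (i + int j * int n)) else 0)"

end

theory Submission
  imports Defs
begin

text \<open>
  Write \<open>d = w(i+1) - w(i) = q n + r\<close>. Since \<open>w\<close> is injective and commutes with
  translation by \<open>n\<close>, \<open>r \<noteq> 0\<close>, and the bias \<open>b\<close> of \<open>w\<close> has \<open>b(i+1) - b(i) = r\<close>.
  A point strictly between \<open>w(i)\<close> and \<open>w(i+1)\<close> is a bead exactly when, relative to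
  \<open>w(i)\<close>, it is congruent to some \<open>w(j)\<close> with \<open>i < j \<le> n\<close>; these occupy \<open>n - i\<close>
  residue classes, and \<open>b\<close> has the same ones. Hence every full period of the gap
  interval contains exactly \<open>i\<close> gaps, so \<open>g\<^sub>i(w) = g\<^sub>i(b) + q i\<close> and \<open>t\<^sub>i = q\<close>.
  On the other hand \<open>w(i + j n) = w(i) + j n < w(i+1)\<close> iff \<open>j n < d\<close> iff \<open>j \<le> q\<close>, so
  the largest such \<open>j\<close> is \<open>q\<close>, and \<open>[i+1, i+q n)\<close> contains exactly \<open>q\<close> multiples of \<open>n\<close>.
\<close>

lemma mult_less_iff_le_div:
  fixes j d n :: int
  assumes "n > 0" "\<not> n dvd d"
  shows "j * n < d \<longleftrightarrow> j \<le> d div n"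
proof
  assume "j * n < d"
  then have "j * n < d div n * n + n"
    using pos_mod_bound[OF assms(1), of d] mod_div_mult_eq[of d n] by linarith
  then have "j * n < (d div n + 1) * n"
    by (simp add: algebra_simps)
  then show "j \<le> d div n"
    using assms(1) by (simp add: mult_less_cancel_right)
next
  assume "j \<le> d div n"
  then have "j * n \<le> d div n * n"
    using assms(1) by (simp add: mult_le_cancel_right)
  moreover have "d mod n \<noteq> 0"
    using assms(2) by (simp add: dvd_eq_mod_eq_0)
  ultimately show "j * n < d"
    using pos_mod_sign[OF assms(1), of d] mod_div_mult_eq[of d n] by linarith
qed

lemma bij_betw_mod_interval:
  fixes a n :: int
  assumes "n > 0"
  shows "bij_betw (\<lambda>y. y mod n) {a..<a + n} {0..<n}"
  unfolding bij_betw_iff_bijections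
proof (intro exI[of _ "\<lambda>z. a + (z - a) mod n"] conjI ballI)
  fix x
  assume "x \<in> {a..<a + n}"
  moreover have "(x mod n - a) mod n = (x - a) mod n"
    by (simp add: mod_diff_left_eq)
  ultimately show "x mod n \<in> {0..<n}" "a + (x mod n - a) mod n = x"
    using assms by auto
next
  fix z
  assume "z \<in> {0..<n}"
  moreover have "(a + (z - a) mod n) mod n = z mod n"
    by (simp add: mod_add_right_eq)
  ultimately show "a + (z - a) mod n \<in> {a..<a + n}" "(a + (z - a) mod n) mod n = z"
    using assms by auto
qed

lemma diff_mod_eq_of_steps:
  fixes f g :: "int \<Rightarrow> int"
  assumes "i \<le> j"
    and "\<And>k. i \<le> k \<Longrightarrow> k < j \<Longrightarrow> (f (k + 1) - f k) mod m = (g (k + 1) - g k) mod m"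
  shows "(f j - f i) mod m = (g j - g i) mod m"
  using assms
proof (induction j rule: int_ge_induct)
  case base
  then show ?case by simp
next
  case (step j)
  have "(f (j + 1) - f i) mod m = ((f (j + 1) - f j) mod m + (f j - f i) mod m) mod m"
    by (simp add: mod_add_eq)
  also have "\<dots> = ((g (j + 1) - g j) mod m + (g j - g i) mod m) mod m"
    using step by simp
  also have "\<dots> = (g (j + 1) - g i) mod m"
    by (simp add: mod_add_eq)
  finally show ?case .
qed

lemma diff_eq_of_steps:
  fixes f g :: "int \<Rightarrow> int"
  assumes "i \<le> j"
    and "\<And>k. i \<le> k \<Longrightarrow> k < j \<Longrightarrow> f (k + 1) - f k = g (k + 1) - g k"
  shows "f j - f i = g j - g i"
  using assms
proof (induction j rule: int_ge_induct)
  case (step j)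
  then show ?case by fastforce
qed simp

lemma periodic_shift:
  fixes f :: "int \<Rightarrow> int"
  assumes periodic: "\<forall>x. f (x + int n) = f x + int n"
  shows "f (x + q * int n) = f x + q * int n"
proof (induction q rule: int_induct[where k = 0])
  case base
  then show ?case by simp
next
  case (step1 q)
  then show ?case
    using periodic[rule_format, of "x + q * int n"] by (simp add: algebra_simps)
next
  case (step2 q)
  then show ?case
    using periodic[rule_format, of "x + (q - 1) * int n"] by (simp add: algebra_simps)
qed

lemma periodic_mod_eq_imp_shift:
  fixes f :: "int \<Rightarrow> int"
  assumes "inj f" "\<forall>x. f (x + int n) = f x + int n" "f x mod int n = f y mod int n"
  obtains q where "y = x + q * int n"
proof
  define q where "q = (f y - f x) div int n"
  have "int n dvd f y - f x"
    using assms(3)[symmetric] by (simp add: mod_eq_dvd_iff)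
  then have "f y = f (x + q * int n)"
    unfolding q_def periodic_shift[OF assms(2)] by simp
  then show "y = x + q * int n"
    using assms(1) by (simp add: inj_eq)
qed

lemma bij_of_periodic_mod_shift:
  fixes f g :: "int \<Rightarrow> int"
  assumes "n > 0" "bij f" "\<forall>x. f (x + int n) = f x + int n" "\<forall>x. g (x + int n) = g x + int n"
    and g_mod: "\<And>x. g x mod int n = (f x + c) mod int n"
  shows "bij g"
proof (rule bijI)
  show "inj g"
  proof (rule injI)
    fix x y
    assume eq: "g x = g y"
    have "(f x + c) mod int n = (f y + c) mod int n"
      using g_mod[of x] g_mod[of y] eq by simp
    then have "f x mod int n = f y mod int n"
      by (simp add: mod_eq_dvd_iff)
    then obtain q where q: "y = x + q * int n"
      using periodic_mod_eq_imp_shift assms(2,3) bij_is_inj by metis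
    then have "q * int n = 0"
      using eq periodic_shift[OF assms(4)] by simp
    with q assms(1) show "x = y" by simp
  qed
  have "y \<in> range g" for y
  proof -
    obtain z where z: "f z = y - c"
      using surjD[OF bij_is_surj[OF assms(2)], of "y - c"] by auto
    have "y mod int n = g z mod int n"
      using g_mod[of z] z by simp
    then have "int n dvd y - g z"
      by (simp add: mod_eq_dvd_iff)
    have "g (z + (y - g z) div int n * int n) = g z + (y - g z) div int n * int n"
      by (rule periodic_shift[OF assms(4)])
    also have "\<dots> = y"
      using \<open>int n dvd y - g z\<close> by simp
    finally show "y \<in> range g" by (metis rangeI)
  qed
  then show "surj g" by blast
qed

definition periodic_extension :: "nat \<Rightarrow> (int \<Rightarrow> int) \<Rightarrow> int \<Rightarrow> int" where
  "periodic_extension n v x = v ((x - 1) mod int n + 1) + (x - 1) div int n * int n"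

lemma periodic_extension_shift:
  "periodic_extension n v (x + int n) = periodic_extension n v x + int n"
proof (cases "n = 0")
  case False
  have "x + int n - 1 = (x - 1) + 1 * int n" by simp
  then show ?thesis
    unfolding periodic_extension_def using False
    by (simp only: mod_mult_self1 div_mult_self1) (simp add: algebra_simps)
qed (simp add: periodic_extension_def)

lemma periodic_extension_window:
  assumes "1 \<le> k" "k \<le> int n"
  shows "periodic_extension n v k = v k"
  using assms by (simp add: periodic_extension_def)

lemma periodic_extension_self:
  fixes f :: "int \<Rightarrow> int"
  assumes "\<forall>x. f (x + int n) = f x + int n"
  shows "periodic_extension n f = f"
proof
  fix x
  have "periodic_extension n f x = f ((x - 1) mod int n + 1 + (x - 1) div int n * int n)"
    unfolding periodic_extension_def by (rule periodic_shift[OF assms, symmetric])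
  also have "(x - 1) mod int n + 1 + (x - 1) div int n * int n = x"
    using mod_div_mult_eq[of "x - 1" "int n"] by simp
  finally show "periodic_extension n f x = f x" .
qed

lemma periodic_extension_cong:
  assumes "n > 0" "\<And>k. 1 \<le> k \<Longrightarrow> k \<le> int n \<Longrightarrow> v k = v' k"
  shows "periodic_extension n v = periodic_extension n v'"
proof
  fix x
  have "1 \<le> (x - 1) mod int n + 1" "(x - 1) mod int n + 1 \<le> int n"
    using assms(1) by (simp_all add: add1_zle_eq)
  then show "periodic_extension n v x = periodic_extension n v' x"
    unfolding periodic_extension_def using assms(2) by simp
qed

lemma periodic_extension_mod_eq:
  fixes f v :: "int \<Rightarrow> int"
  assumes "n > 0" "\<forall>x. f (x + int n) = f x + int n"
    and window: "\<And>k. 1 \<le> k \<Longrightarrow> k \<le> int n \<Longrightarrow> v k mod int n = (f k + c) mod int n"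
  shows "periodic_extension n v x mod int n = (f x + c) mod int n"
proof -
  let ?r = "(x - 1) mod int n + 1" and ?q = "(x - 1) div int n"
  have "1 \<le> ?r" "?r \<le> int n"
    using assms(1) by (simp_all add: add1_zle_eq)
  have "periodic_extension n v x mod int n = v ?r mod int n"
    unfolding periodic_extension_def by simp
  also have "\<dots> = (f ?r + c) mod int n"
    using window \<open>1 \<le> ?r\<close> \<open>?r \<le> int n\<close> .
  also have "\<dots> = ((f ?r + ?q * int n) + c) mod int n"
    using mod_mult_self1[of "f ?r + c" ?q "int n"] by (simp add: ac_simps)
  also have "f ?r + ?q * int n = f x"
    using fun_cong[OF periodic_extension_self[OF assms(2)], of x]
    unfolding periodic_extension_def .
  finally show ?thesis .
qed

lemma ScircD:
  assumes "w \<in> Scirc n"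
  shows "bij w" "\<forall>x. w (x + int n) = w x + int n"
    "(\<Sum>k = 1..int n. w k) = int ((n + 1) choose 2)"
    "\<forall>i. 1 \<le> i \<and> i < int n \<longrightarrow> w i < w (i + 1)"
  using assms unfolding Scirc_def affine_perm_def by auto

lemma window_mono:
  fixes w :: "int \<Rightarrow> int"
  assumes "\<forall>i. 1 \<le> i \<and> i < int n \<longrightarrow> w i < w (i + 1)" "1 \<le> a" "a \<le> b" "b \<le> int n"
  shows "w a \<le> w b"
  using assms(3,4)
proof (induction b rule: int_ge_induct)
  case (step b)
  then have "w b < w (b + 1)"
    using assms(1,2) by simp
  with step show ?case by simp
qed simp

lemma Scirc_step_mod_nonzero:
  assumes "n \<ge> 2" "w \<in> Scirc n"
  shows "(w (k + 1) - w k) mod int n \<noteq> 0"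
proof
  assume "(w (k + 1) - w k) mod int n = 0"
  then have "w (k + 1) mod int n = w k mod int n"
    by (simp add: mod_eq_dvd_iff dvd_eq_mod_eq_0)
  then obtain q where "k = k + 1 + q * int n"
    using periodic_mod_eq_imp_shift ScircD(1,2)[OF assms(2)] bij_is_inj by metis
  then have "q * int n = - 1" by simp
  then have "int n dvd 1"
    using dvd_triv_right[of "int n" q] by simp
  with assms(1) show False
    using zdvd_imp_le[of "int n" 1] by simp
qed

lemma Scirc_inj_on_window_residues:
  assumes "w \<in> Scirc n"
  shows "inj_on (\<lambda>j. (w j - c) mod int n) {1..int n}"
proof (rule inj_onI)
  fix j j'
  assume j: "j \<in> {1..int n}" and j': "j' \<in> {1..int n}"
    and eq: "(w j - c) mod int n = (w j' - c) mod int n"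
  have "w j mod int n = w j' mod int n"
    using eq by (simp add: mod_eq_dvd_iff)
  then obtain q where q: "j' = j + q * int n"
    using periodic_mod_eq_imp_shift ScircD(1,2)[OF assms] bij_is_inj by metis
  have "q = 0"
  proof (rule ccontr)
    assume "q \<noteq> 0"
    then consider "q \<ge> 1" | "q \<le> -1" by linarith
    then show False
    proof cases
      case 1
      then have "q * int n \<ge> int n"
        using mult_right_mono[of 1 q "int n"] by simp
      with j j' q show False by simp
    next
      case 2
      then have "q * int n \<le> - int n"
        using mult_right_mono[of q "-1" "int n"] by simp
      with j j' q show False by simp
    qed
  qed
  with q show "j = j'" by simp
qed

lemma periodic_extension_in_Scirc:
  assumes "n > 0" "w \<in> Scirc n"
    and mono: "\<And>k. 1 \<le> k \<Longrightarrow> k < int n \<Longrightarrow> v k < v (k + 1)"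
    and residues: "\<And>k. 1 \<le> k \<Longrightarrow> k \<le> int n \<Longrightarrow> v k mod int n = (w k + c) mod int n"
    and sum: "(\<Sum>k = 1..int n. v k) = int ((n + 1) choose 2)"
  shows "periodic_extension n v \<in> Scirc n"
proof -
  let ?b = "periodic_extension n v"
  note w = ScircD[OF assms(2)]
  have periodic: "\<forall>x. ?b (x + int n) = ?b x + int n"
    by (simp add: periodic_extension_shift)
  have "?b x mod int n = (w x + c) mod int n" for x
    using periodic_extension_mod_eq[OF assms(1) w(2) residues] .
  then have "bij ?b"
    using bij_of_periodic_mod_shift[OF _ w(1,2) periodic] assms(1) by simp
  moreover have "(\<Sum>k = 1..int n. ?b k) = int ((n + 1) choose 2)"
    using sum by (simp add: periodic_extension_window)
  moreover have "\<forall>k. 1 \<le> k \<and> k < int n \<longrightarrow> ?b k < ?b (k + 1)"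
    using mono by (simp add: periodic_extension_window)
  ultimately show ?thesis
    unfolding Scirc_def affine_perm_def using periodic by blast
qed

definition later_residues :: "nat \<Rightarrow> (int \<Rightarrow> int) \<Rightarrow> int \<Rightarrow> int set" where
  "later_residues n w i = (\<lambda>j. (w j - w i) mod int n) ` {i + 1..int n}"

lemma card_compl_later_residues:
  assumes "w \<in> Scirc n" "1 \<le> i" "i \<le> int n"
  shows "card ({0..<int n} - later_residues n w i) = nat i"
proof -
  have "inj_on (\<lambda>j. (w j - w i) mod int n) {i + 1..int n}"
    using Scirc_inj_on_window_residues[OF assms(1)] by (rule inj_on_subset) (use assms in auto)
  then have "card (later_residues n w i) = nat (int n - i)"
    unfolding later_residues_def by (simp add: card_image)
  moreover have "later_residues n w i \<subseteq> {0..<int n}"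
    unfolding later_residues_def using assms by auto
  ultimately show ?thesis
    using assms by (simp add: card_Diff_subset finite_subset)
qed

lemma bead_iff_later_residue:
  assumes "w \<in> Scirc n" "1 \<le> i" "i < int n" "w i < x" "x < w (i + 1)"
  shows "bead n w x \<longleftrightarrow> (x - w i) mod int n \<in> later_residues n w i"
proof
  note mono = ScircD(4)[OF assms(1)]
  assume "bead n w x"
  then obtain j m where jm: "1 \<le> j" "j \<le> int n" "0 \<le> m" "x = w j - m * int n"
    unfolding bead_def by blast
  have "i < j"
  proof (rule ccontr)
    assume "\<not> i < j"
    then have "w j \<le> w i"
      using window_mono[OF mono] jm assms(2,3) by simp
    moreover have "0 \<le> m * int n"
      using jm(3) by simp
    ultimately show False
      using jm(4) assms(4) by linarith
  qed
  moreover have "(x - w i) mod int n = (w j - w i) mod int n"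
    using jm(4) by (simp add: mod_eq_dvd_iff)
  ultimately show "(x - w i) mod int n \<in> later_residues n w i"
    unfolding later_residues_def using jm(2) by force
next
  note mono = ScircD(4)[OF assms(1)]
  assume "(x - w i) mod int n \<in> later_residues n w i"
  then obtain j where j: "i + 1 \<le> j" "j \<le> int n"
    and eq: "(x - w i) mod int n = (w j - w i) mod int n"
    unfolding later_residues_def by auto
  define m where "m = (w j - x) div int n"
  have "int n dvd w j - x"
    using eq by (simp add: mod_eq_dvd_iff dvd_diff_commute)
  then have x_eq: "x = w j - m * int n"
    unfolding m_def by simp
  have "w (i + 1) \<le> w j"
    using window_mono[OF mono] j assms(2) by simp
  then have "0 \<le> m"
    unfolding m_def using assms(5) by (simp add: div_int_pos_iff)
  with j x_eq assms(2) show "bead n w x"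
    unfolding bead_def by (intro exI[of _ j] exI[of _ m]) simp
qed

definition nonresidue_count :: "nat \<Rightarrow> int set \<Rightarrow> int \<Rightarrow> nat \<Rightarrow> nat" where
  "nonresidue_count n R a L = card {y. a \<le> y \<and> y < a + int L \<and> y mod int n \<notin> R}"

lemma nonresidue_count_add:
  "nonresidue_count n R a (L + L') = nonresidue_count n R a L + nonresidue_count n R (a + int L) L'"
proof -
  let ?A = "{y. a \<le> y \<and> y < a + int L \<and> y mod int n \<notin> R}"
  let ?B = "{y. a + int L \<le> y \<and> y < a + int L + int L' \<and> y mod int n \<notin> R}"
  have "{y. a \<le> y \<and> y < a + int (L + L') \<and> y mod int n \<notin> R} = ?A \<union> ?B"
    by auto
  moreover have "finite ?A" "finite ?B"
    by (auto intro: finite_subset[of _ "{a..<a + int L + int L'}"])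
  ultimately show ?thesis
    unfolding nonresidue_count_def by (simp add: card_Un_disjoint disjoint_iff)
qed

lemma nonresidue_count_period:
  assumes "n > 0"
  shows "nonresidue_count n R a n = card ({0..<int n} - R)"
proof -
  have "bij_betw (\<lambda>y. y mod int n)
      {y \<in> {a..<a + int n}. y mod int n \<notin> R} {z \<in> {0..<int n}. z \<notin> R}"
    using bij_betw_mod_interval[of "int n" a] assms by (intro bij_betw_Collect) auto
  moreover have "{y \<in> {a..<a + int n}. y mod int n \<notin> R}
      = {y. a \<le> y \<and> y < a + int n \<and> y mod int n \<notin> R}"
    "{z \<in> {0..<int n}. z \<notin> R} = {0..<int n} - R"
    by auto
  ultimately show ?thesis
    unfolding nonresidue_count_def by (simp add: bij_betw_same_card)
qed

lemma nonresidue_count_mult: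
  assumes "n > 0"
  shows "nonresidue_count n R a (k * n) = k * card ({0..<int n} - R)"
proof (induction k arbitrary: a)
  case 0
  then show ?case by (auto simp: nonresidue_count_def card_eq_0_iff)
next
  case (Suc k)
  then show ?case
    using nonresidue_count_add[of n R a n "k * n"] nonresidue_count_period[OF assms] by simp
qed

lemma gapcount_eq_nonresidue_count:
  assumes "w \<in> Scirc n" "1 \<le> i" "i < int n"
  shows "gapcount n w i = nonresidue_count n (later_residues n w i) 1 (nat (w (i + 1) - w i - 1))"
proof -
  let ?G = "{x. w i < x \<and> x < w (i + 1) \<and> \<not> bead n w x}"
  let ?S = "{y. 1 \<le> y \<and> y < 1 + int (nat (w (i + 1) - w i - 1))
      \<and> y mod int n \<notin> later_residues n w i}"
  have "w i < w (i + 1)"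
    using ScircD(4)[OF assms(1)] assms(2,3) by simp
  then have G_S: "x - w i \<in> ?S" if "x \<in> ?G" for x
    using that bead_iff_later_residue[OF assms, of x] by simp
  have S_G: "y + w i \<in> ?G" if "y \<in> ?S" for y
    using that \<open>w i < w (i + 1)\<close> bead_iff_later_residue[OF assms, of "y + w i"] by simp
  have "bij_betw (\<lambda>x. x - w i) ?G ?S"
    by (rule bij_betw_byWitness[where f' = "\<lambda>y. y + w i"]) (use G_S S_G in auto)
  then show ?thesis
    unfolding gapcount_def nonresidue_count_def by (rule bij_betw_same_card)
qed

definition is_bias_of :: "nat \<Rightarrow> (int \<Rightarrow> int) \<Rightarrow> (int \<Rightarrow> int) \<Rightarrow> bool" where
  "is_bias_of n w b \<longleftrightarrow> b \<in> BIAS n \<and> (\<forall>i. 1 \<le> i \<and> i < int n \<longrightarrow>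
      (b (i + 1) - b i) mod int n = (w (i + 1) - w i) mod int n)"

lemma bias_unique:
  assumes "n \<ge> 2" "is_bias_of n w b" "is_bias_of n w b'"
  shows "b' = b"
proof -
  have b: "b \<in> Scirc n" "b' \<in> Scirc n"
    using assms(2,3) unfolding is_bias_of_def BIAS_def by auto
  have steps: "b' (k + 1) - b' k = b (k + 1) - b k" if "1 \<le> k" "k < int n" for k
  proof -
    have "(b' (k + 1) - b' k) mod int n = (b (k + 1) - b k) mod int n"
      using assms(2,3) that unfolding is_bias_of_def by simp
    moreover have "b' (k + 1) - b' k \<in> {1..int n - 1}" "b (k + 1) - b k \<in> {1..int n - 1}"
      using assms(2,3) that unfolding is_bias_of_def BIAS_def by auto
    ultimately show ?thesis by simp
  qed
  define c where "c = b' 1 - b 1"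
  have window: "b' k = b k + c" if "1 \<le> k" "k \<le> int n" for k
    using diff_eq_of_steps[of 1 k b' b] steps that unfolding c_def by simp
  have "(\<Sum>k = 1..int n. b' k) = (\<Sum>k = 1..int n. b k) + int n * c"
    by (simp add: window sum.distrib)
  then have "c = 0"
    using ScircD(3)[OF b(1)] ScircD(3)[OF b(2)] assms(1) by simp
  then have "periodic_extension n b' = periodic_extension n b"
    using assms(1) window by (intro periodic_extension_cong) auto
  then show "b' = b"
    by (simp add: periodic_extension_self ScircD(2) b)
qed

text \<open>
  The bias is built on the window from the partial sums \<open>D\<close> of the steps of \<open>w\<close> reduced mod \<open>n\<close>;
  the constant \<open>e\<close> makes the window sum equal to \<open>binomial (n+1) 2\<close>.
\<close>
lemma bias_exists:
  assumes "n \<ge> 2" and w: "w \<in> Scirc n"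
  obtains b where "is_bias_of n w b"
proof
  have n: "int n > 0" using assms(1) by simp
  define D where "D k = (\<Sum>m<nat (k - 1). (w (int m + 2) - w (int m + 1)) mod int n)" for k
  have D_step: "D (k + 1) - D k = (w (k + 1) - w k) mod int n" if "1 \<le> k" for k
  proof -
    have "nat (k + 1 - 1) = Suc (nat (k - 1))" "int (nat (k - 1)) = k - 1"
      using that by simp_all
    then show ?thesis
      unfolding D_def by (simp add: add.commute)
  qed
  have D_mod: "D k mod int n = (w k - w 1) mod int n" if "1 \<le> k" for k
    using diff_mod_eq_of_steps[of 1 k D "int n" w] D_step that by (simp add: D_def)
  have step_range: "(w (k + 1) - w k) mod int n \<in> {1..int n - 1}" for k
  proof -
    have "0 \<le> (w (k + 1) - w k) mod int n" "(w (k + 1) - w k) mod int n < int n"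
      using n by simp_all
    with Scirc_step_mod_nonzero[OF assms(1) w, of k] show ?thesis by simp
  qed
  define T where "T = int ((n + 1) choose 2)"
  define e where "e = (T - (\<Sum>k = 1..int n. D k)) div int n"
  define b where "b = periodic_extension n (\<lambda>k. e + D k)"
  have b_step: "b (k + 1) - b k = (w (k + 1) - w k) mod int n" if "1 \<le> k" "k < int n" for k
    using that D_step[of k] unfolding b_def by (simp add: periodic_extension_window)
  have "b \<in> Scirc n"
    unfolding b_def
  proof (rule periodic_extension_in_Scirc[OF _ w])
    show "e + D k < e + D (k + 1)" if "1 \<le> k" for k
      using D_step[OF that] step_range[of k] by simp
    show "(e + D k) mod int n = (w k + (e - w 1)) mod int n" if "1 \<le> k" for k
    proof -
      have "(e + D k) mod int n = (e + (w k - w 1)) mod int n"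
        using that by (intro mod_add_cong D_mod) simp_all
      then show ?thesis
        by (simp add: algebra_simps)
    qed
    have "(\<Sum>k = 1..int n. D k) mod int n = (\<Sum>k = 1..int n. w k - w 1) mod int n"
      using D_mod by (subst (1 2) mod_sum_eq[symmetric]) simp
    also have "(\<Sum>k = 1..int n. w k - w 1) = T - int n * w 1"
      using ScircD(3)[OF w] unfolding T_def by (simp add: sum_subtractf)
    also have "(T - int n * w 1) mod int n = T mod int n"
      using mod_mult_self1[of T "- w 1" "int n"] by (simp add: algebra_simps)
    finally have "int n dvd T - (\<Sum>k = 1..int n. D k)"
      by (simp add: mod_eq_dvd_iff[symmetric])
    then show "(\<Sum>k = 1..int n. e + D k) = int ((n + 1) choose 2)"
      unfolding T_def[symmetric] by (simp add: sum.distrib e_def)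
  qed (use n in simp)
  then show "is_bias_of n w b"
    unfolding is_bias_of_def BIAS_def using b_step step_range by simp
qed

lemma bias_of_spec:
  assumes "n \<ge> 2" "w \<in> Scirc n"
  shows "is_bias_of n w (bias_of n w)"
proof -
  obtain b where "is_bias_of n w b"
    using bias_exists[OF assms] .
  then have "\<exists>!b. is_bias_of n w b"
    using bias_unique[OF assms(1)] by blast
  then show ?thesis
    unfolding bias_of_def is_bias_of_def[symmetric] by (rule theI')
qed

lemma later_residues_bias:
  assumes "is_bias_of n w b" "1 \<le> i"
  shows "later_residues n b i = later_residues n w i"
proof -
  have "(b j - b i) mod int n = (w j - w i) mod int n" if "j \<in> {i + 1..int n}" for j
  proof (rule diff_mod_eq_of_steps)
    show "i \<le> j"
      using that by simp
    fix k
    assume "i \<le> k" "k < j"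
    then show "(b (k + 1) - b k) mod int n = (w (k + 1) - w k) mod int n"
      using that assms unfolding is_bias_of_def by simp
  qed
  then show ?thesis
    unfolding later_residues_def by (rule image_cong[OF refl])
qed

lemma gapcount_eq_bias_gapcount:
  assumes "n \<ge> 2" "w \<in> Scirc n" "1 \<le> i" "i < int n"
  shows "gapcount n w i = gapcount n (bias_of n w) i + nat ((w (i + 1) - w i) div int n) * nat i"
proof -
  define b where "b = bias_of n w"
  define d where "d = w (i + 1) - w i"
  have b: "is_bias_of n w b"
    unfolding b_def using bias_of_spec[OF assms(1,2)] .
  have "b \<in> Scirc n" "b (i + 1) - b i \<in> {1..int n - 1}"
    "(b (i + 1) - b i) mod int n = d mod int n"
    using b assms(3,4) unfolding is_bias_of_def BIAS_def d_def by auto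
  then have b_step: "b (i + 1) - b i = d mod int n" "1 \<le> d mod int n"
    by simp_all
  have "d \<ge> 1"
    using ScircD(4)[OF assms(2), rule_format, of i] assms(3,4) unfolding d_def by simp
  then have "int (nat (d div int n) * n) = d div int n * int n"
    by (simp add: div_int_pos_iff)
  then have d_split: "nat (d - 1) = nat (d mod int n - 1) + nat (d div int n) * n"
    using b_step(2) mod_div_mult_eq[of d "int n"] by linarith
  let ?R = "later_residues n w i"
  have "gapcount n w i = nonresidue_count n ?R 1 (nat (d - 1))"
    unfolding d_def by (rule gapcount_eq_nonresidue_count[OF assms(2-4)])
  also have "\<dots> = nonresidue_count n ?R 1 (nat (d mod int n - 1))
      + nonresidue_count n ?R (1 + int (nat (d mod int n - 1))) (nat (d div int n) * n)"
    unfolding d_split by (rule nonresidue_count_add)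
  also have "nonresidue_count n ?R 1 (nat (d mod int n - 1)) = gapcount n b i"
    using gapcount_eq_nonresidue_count[OF \<open>b \<in> Scirc n\<close> assms(3,4)] b_step
      later_residues_bias[OF b assms(3)] by simp
  also have "nonresidue_count n ?R (1 + int (nat (d mod int n - 1))) (nat (d div int n) * n)
      = nat (d div int n) * nat i"
    using nonresidue_count_mult card_compl_later_residues[OF assms(2,3)] assms(1,4) by simp
  finally show ?thesis
    unfolding b_def d_def .
qed

lemma t_coord_eq_step_div:
  assumes "n \<ge> 2" "w \<in> Scirc n" "1 \<le> i" "i < int n"
  shows "t_coord n w i = nat ((w (i + 1) - w i) div int n)"
proof -
  define k where "k = nat ((w (i + 1) - w i) div int n)"
  have gap: "int (gapcount n w i) = i * int k + int (gapcount n (bias_of n w) i)"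
    using gapcount_eq_bias_gapcount[OF assms] assms(3) unfolding k_def[symmetric] by simp
  have "(THE t. int (gapcount n w i) = i * int t + int (gapcount n (bias_of n w) i)) = k"
  proof (rule the_equality)
    fix t
    assume "int (gapcount n w i) = i * int t + int (gapcount n (bias_of n w) i)"
    with gap assms(3) show "t = k" by simp
  qed (rule gap)
  then show ?thesis
    unfolding t_coord_def k_def .
qed

lemma jmax_eq_step_div:
  assumes "n > 0" "\<forall>x. w (x + int n) = w x + int n" "\<not> int n dvd w (i + 1) - w i"
  shows "jmax n w i = nat ((w (i + 1) - w i) div int n)"
proof -
  define k where "k = nat ((w (i + 1) - w i) div int n)"
  have "w (i + 1) > w (i + int j * int n) \<longleftrightarrow> int j * int n < w (i + 1) - w i" for j :: nat
    using periodic_shift[OF assms(2), of i "int j"] by linarith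
  moreover have "int j * int n < w (i + 1) - w i \<longleftrightarrow> int j \<le> (w (i + 1) - w i) div int n" for j :: nat
    using mult_less_iff_le_div[of "int n" "w (i + 1) - w i" "int j"] assms(1,3) by simp
  ultimately have cond: "(1 \<le> j \<and> w (i + 1) > w (i + int j * int n)) \<longleftrightarrow> (1 \<le> j \<and> j \<le> k)" for j
    unfolding k_def by auto
  have "(GREATEST j. 1 \<le> j \<and> j \<le> k) = k" if "1 \<le> k"
    using that by (intro Greatest_equality) auto
  then show ?thesis
    unfolding jmax_def cond k_def[symmetric] by auto
qed

lemma card_window_boundaries:
  assumes "1 \<le> i" "i < int n"
  shows "card {r::int. i + 1 \<le> r * int n \<and> r * int n < i + int k * int n} = k"
proof -
  have lower: "i + 1 \<le> r * int n \<longleftrightarrow> 1 \<le> r" for r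
  proof
    assume "i + 1 \<le> r * int n"
    then have "0 < r * int n"
      using assms(1) by linarith
    then show "1 \<le> r"
      by (simp add: zero_less_mult_iff)
  next
    assume "1 \<le> r"
    then have "int n \<le> r * int n"
      using mult_right_mono[of 1 r "int n"] by simp
    then show "i + 1 \<le> r * int n"
      using assms(2) by linarith
  qed
  have upper: "r * int n < i + int k * int n \<longleftrightarrow> r \<le> int k" for r
  proof
    assume "r * int n < i + int k * int n"
    then have "r * int n < (int k + 1) * int n"
      using assms(2) by (simp add: algebra_simps)
    then show "r \<le> int k"
      by (simp add: mult_less_cancel_right)
  next
    assume "r \<le> int k"
    then have "r * int n \<le> int k * int n"
      by (simp add: mult_right_mono)
    then show "r * int n < i + int k * int n"
      using assms(1) by linarith
  qed
  have "{r::int. i + 1 \<le> r * int n \<and> r * int n < i + int k * int n} = {1..int k}"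
    using lower upper by auto
  then show ?thesis by simp
qed

theorem mainTheorem6:
  fixes n :: nat and w :: "int \<Rightarrow> int" and i :: int
  assumes "n \<ge> 2" and "w \<in> Scirc n" and "1 \<le> i" and "i \<le> int n - 1"
  shows "int (t_coord n w i) =
    int (card {r::int. i + 1 \<le> r * int n \<and> r * int n < i + int (jmax n w i) * int n})"
proof -
  have i: "i < int n"
    using assms(4) by simp
  have "\<not> int n dvd w (i + 1) - w i"
    using Scirc_step_mod_nonzero[OF assms(1,2)] by (simp add: dvd_eq_mod_eq_0)
  then have "jmax n w i = t_coord n w i"
    using jmax_eq_step_div[OF _ ScircD(2)[OF assms(2)]] t_coord_eq_step_div[OF assms(1-3) i] assms(1)
    by simp
  then show ?thesis
    using card_window_boundaries[OF assms(3) i] by simp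
qed

end
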